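(* Let $C\subseteq\mathbb{C}$ be a subring, $D>0$, and let $F(A;X)=\big(\sum_i|f_i(A;X)|^2\big)^{\varepsilon/2}$ be an absolute polynomial power in $A=(A_1,\dots,A_m)$, $X=(X_1,\dots,X_n)$, with finitely many $f_i\in C[A,X]$ of degree at most $D$ and $\varepsilon\ge0$ rational. Assume $F$ is symmetric in $X$: $F(A;X_{\pi(1)},\dots,X_{\pi(n)})=F(A;X)$ for all permutations $\pi\in S_n$ (as functions on $\mathbb{C}^{m+n}$). Then there is an absolute polynomial power $\tilde F(A;\Sigma)$ in $A$ and $\Sigma=(\Sigma_1,\dots,\Sigma_n)$ with coefficients in $C$ such that $F(A;X)\sim\tilde F(A;\sigma_1(X),\dots,\sigma_n(X))$ on $\mathbb{C}^{m+n}$, with implied constants depending only on $\varepsilon$, $D$, $n$ and the number of terms of $F$.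
   Context: An absolute polynomial power with coefficients in $C$ is an expression $(\sum_i|P_i|^2)^{\varepsilon/2}$ with finitely many polynomials $P_i$ with coefficients in $C$ and $\varepsilon\ge0$ rational. The elementary symmetric polynomials $\sigma_j\in\mathbb{Z}[X_1,\dots,X_n]$ are defined by $\prod_{i=1}^n(T+X_i)=T^n+\sum_{j=1}^n\sigma_jT^{n-j}$. $\sim$ means each side is bounded by a positive constant times the other. *)

theory Defs
  imports Complex_Main "HOL-Computational_Algebra.Polynomial" "HOL-Combinatorics.Permutations"
begin

text \<open>Multivariate polynomials in the variables indexed by 0,...,N-1, represented by
  their coefficient function on exponent vectors (nat => nat).\<close>
type_synonym mpoly = "(nat \<Rightarrow> nat) \<Rightarrow> complex"

definition is_mpoly :: "nat \<Rightarrow> complex set \<Rightarrow> mpoly \<Rightarrow> bool" where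
  "is_mpoly N C p \<longleftrightarrow> finite {\<alpha>. p \<alpha> \<noteq> 0} \<and>
     (\<forall>\<alpha>. p \<alpha> \<noteq> 0 \<longrightarrow> (\<forall>i\<ge>N. \<alpha> i = 0) \<and> p \<alpha> \<in> C)"

definition mdeg_le :: "nat \<Rightarrow> mpoly \<Rightarrow> nat \<Rightarrow> bool" where
  "mdeg_le N p D \<longleftrightarrow> (\<forall>\<alpha>. p \<alpha> \<noteq> 0 \<longrightarrow> (\<Sum>i<N. \<alpha> i) \<le> D)"

definition meval :: "nat \<Rightarrow> mpoly \<Rightarrow> (nat \<Rightarrow> complex) \<Rightarrow> complex" where
  "meval N p z = (\<Sum>\<alpha>\<in>{\<alpha>. p \<alpha> \<noteq> 0}. p \<alpha> * (\<Prod>i<N. z i ^ \<alpha> i))"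

text \<open>Absolute polynomial power (sum_i |P_i|^2)^(eps/2), with the convention t^0 = 1.\<close>
definition apow :: "nat \<Rightarrow> mpoly list \<Rightarrow> real \<Rightarrow> (nat \<Rightarrow> complex) \<Rightarrow> real" where
  "apow N ps \<epsilon> z = (if \<epsilon> = 0 then 1
      else (\<Sum>p\<leftarrow>ps. (cmod (meval N p z))\<^sup>2) powr (\<epsilon> / 2))"

definition subring_C :: "complex set \<Rightarrow> bool" where
  "subring_C C \<longleftrightarrow> 0 \<in> C \<and> 1 \<in> C \<and>
     (\<forall>x\<in>C. \<forall>y\<in>C. x + y \<in> C \<and> x - y \<in> C \<and> x * y \<in> C)"

definition esym :: "nat \<Rightarrow> (nat \<Rightarrow> complex) \<Rightarrow> nat \<Rightarrow> complex" where
  "esym n x j = coeff (\<Prod>i<n. [:x i, 1:]) (n - j)"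

text \<open>Variables 0..m-1 are A, variables m..m+n-1 are X.\<close>
definition permvars :: "nat \<Rightarrow> nat \<Rightarrow> (nat \<Rightarrow> nat) \<Rightarrow> (nat \<Rightarrow> complex) \<Rightarrow> nat \<Rightarrow> complex" where
  "permvars m n \<pi> z = (\<lambda>i. if i < m then z i else if i < m + n then z (m + \<pi> (i - m)) else z i)"

definition symvars :: "nat \<Rightarrow> nat \<Rightarrow> (nat \<Rightarrow> complex) \<Rightarrow> nat \<Rightarrow> complex" where
  "symvars m n z = (\<lambda>i. if i < m then z i
      else if i < m + n then esym n (\<lambda>j. z (m + j)) (i - m + 1) else 0)"

end

theory Submission
  imports Defs
begin

text \<open>Put \<open>N = n!\<close>, \<open>L = N!\<close> and \<open>S = \<Sum>\<^sub>i |f\<^sub>i|\<^sup>2\<close>, so that \<open>F = S\<^sup>\<epsilon>\<^sup>/\<^sup>2\<close>. For each \<open>i\<close> the orbit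
  polynomial \<open>\<Prod>\<^sub>\<pi> (T + f\<^sub>i(A; X\<^sub>\<pi>))\<close> has coefficients \<open>e\<^sub>i\<^sub>j\<close> (at \<open>T\<^sup>N\<^sup>-\<^sup>j\<close>) that are
  symmetric in \<open>X\<close>, hence, by the fundamental theorem on symmetric polynomials (proved below for
  polynomial functions with coefficients in \<open>C\<close>, by induction on \<open>n\<close>), polynomials in \<open>A\<close> and
  \<open>\<sigma>(X)\<close>. Let \<open>G = \<Sum>\<^sub>i\<^sub>,\<^sub>j |e\<^sub>i\<^sub>j|\<^sup>2\<^sup>L\<^sup>/\<^sup>j\<close>, a sum of squared moduli of the polynomials \<open>e\<^sub>i\<^sub>j\<^sup>L\<^sup>/\<^sup>j\<close>.
  Since \<open>S\<close> is symmetric, every root \<open>f\<^sub>i(A; X\<^sub>\<pi>)\<close> is bounded by \<open>S\<^sup>1\<^sup>/\<^sup>2\<close>, and \<open>e\<^sub>i\<^sub>j\<close> has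
  degree \<open>j\<close> in the roots, so \<open>G \<lesssim> S\<^sup>L\<close>; conversely Fujiwara's root bound gives
  \<open>|f\<^sub>i| \<le> 2 max\<^sub>j |e\<^sub>i\<^sub>j|\<^sup>1\<^sup>/\<^sup>j \<le> 2 G\<^sup>1\<^sup>/\<^sup>2\<^sup>L\<close>, so \<open>S\<^sup>L \<lesssim> G\<close>. Hence
  \<open>F \<sim> G\<^sup>\<epsilon>\<^sup>/\<^sup>2\<^sup>L\<close>, an absolute polynomial power in \<open>A\<close> and \<open>\<sigma>(X)\<close> with exponent \<open>\<epsilon>/L\<close>.
  The constants depend only on \<open>n\<close>, \<open>k\<close> and \<open>\<epsilon>\<close>.\<close>

section \<open>Polynomial functions\<close>

lemma subring_C_closed:
  assumes "subring_C C"
  shows "0 \<in> C" "1 \<in> C" "-1 \<in> C"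
    and "x \<in> C \<Longrightarrow> y \<in> C \<Longrightarrow> x + y \<in> C"
    and "x \<in> C \<Longrightarrow> y \<in> C \<Longrightarrow> x * y \<in> C"
  using assms unfolding subring_C_def by (metis diff_0)+

lemma subring_C_sum: "subring_C C \<Longrightarrow> (\<And>x. x \<in> S \<Longrightarrow> f x \<in> C) \<Longrightarrow> sum f S \<in> C"
  by (induction S rule: infinite_finite_induct) (auto intro: subring_C_closed)

inductive polyfun :: "complex set \<Rightarrow> nat \<Rightarrow> ((nat \<Rightarrow> complex) \<Rightarrow> complex) \<Rightarrow> bool"
  for C :: "complex set" and N :: nat where
  polyfun_const: "c \<in> C \<Longrightarrow> polyfun C N (\<lambda>z. c)"
| polyfun_var: "i < N \<Longrightarrow> polyfun C N (\<lambda>z. z i)"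
| polyfun_add: "polyfun C N f \<Longrightarrow> polyfun C N g \<Longrightarrow> polyfun C N (\<lambda>z. f z + g z)"
| polyfun_mult: "polyfun C N f \<Longrightarrow> polyfun C N g \<Longrightarrow> polyfun C N (\<lambda>z. f z * g z)"

lemma polyfun_sum:
  "subring_C C \<Longrightarrow> (\<And>x. x \<in> S \<Longrightarrow> polyfun C N (f x)) \<Longrightarrow> polyfun C N (\<lambda>z. \<Sum>x\<in>S. f x z)"
  by (induction S rule: infinite_finite_induct)
    (auto intro: polyfun_add polyfun_const subring_C_closed)

lemma polyfun_prod:
  "subring_C C \<Longrightarrow> (\<And>x. x \<in> S \<Longrightarrow> polyfun C N (f x)) \<Longrightarrow> polyfun C N (\<lambda>z. \<Prod>x\<in>S. f x z)"
  by (induction S rule: infinite_finite_induct)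
    (auto intro: polyfun_mult polyfun_const subring_C_closed)

lemma polyfun_power: "subring_C C \<Longrightarrow> polyfun C N f \<Longrightarrow> polyfun C N (\<lambda>z. f z ^ k)"
  using polyfun_prod[of C "{..<k}" N "\<lambda>_. f"] by simp

lemma polyfun_cong_vars: "polyfun C N f \<Longrightarrow> (\<And>i. i < N \<Longrightarrow> z i = w i) \<Longrightarrow> f z = f w"
  by (induction rule: polyfun.induct) auto

lemma polyfun_subst:
  "polyfun C N f \<Longrightarrow> (\<And>i. i < N \<Longrightarrow> polyfun C N' (\<lambda>z. \<rho> z i)) \<Longrightarrow> polyfun C N' (\<lambda>z. f (\<rho> z))"
  by (induction rule: polyfun.induct) (auto intro: polyfun.intros)

lemma polyfun_on_line: "polyfun C N f \<Longrightarrow> \<exists>q. \<forall>t. f (\<lambda>i. a i + t * b i) = poly q t"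
proof (induction rule: polyfun.induct)
  case (polyfun_const c)
  show ?case by (rule exI[of _ "[:c:]"]) simp
next
  case (polyfun_var i)
  show ?case by (rule exI[of _ "[:a i, b i:]"]) (simp add: mult.commute)
next
  case (polyfun_add f g)
  then obtain p q where "\<forall>t. f (\<lambda>i. a i + t * b i) = poly p t" "\<forall>t. g (\<lambda>i. a i + t * b i) = poly q t"
    by blast
  then show ?case by (intro exI[of _ "p + q"]) simp
next
  case (polyfun_mult f g)
  then obtain p q where "\<forall>t. f (\<lambda>i. a i + t * b i) = poly p t" "\<forall>t. g (\<lambda>i. a i + t * b i) = poly q t"
    by blast
  then show ?case by (intro exI[of _ "p * q"]) simp
qed

text \<open>Perturbing \<open>z\<close> along the line \<open>z + t \<cdot> (0, 1, 2, \<dots>)\<close> makes it injective on \<open>I\<close>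
  for all but finitely many \<open>t\<close>.\<close>
lemma polyfun_eqI_on_injective:
  assumes f: "polyfun C N f" and g: "polyfun C N g" and I: "finite I"
    and eq: "\<And>z. inj_on z I \<Longrightarrow> f z = g z"
  shows "f z = g z"
proof -
  define line where "line t = (\<lambda>i. z i + t * of_nat i)" for t
  obtain p q where p: "\<And>t. f (line t) = poly p t" and q: "\<And>t. g (line t) = poly q t"
    using polyfun_on_line[OF f, of z of_nat] polyfun_on_line[OF g, of z of_nat]
    unfolding line_def by blast
  define B where "B = (\<lambda>(a, b). (z a - z b) / (of_nat b - of_nat a)) ` (I \<times> I)"
  have "poly (p - q) t = 0" if "t \<notin> B" for t
  proof -
    have "inj_on (line t) I"
    proof (rule inj_onI)
      fix a b assume ab: "a \<in> I" "b \<in> I" "line t a = line t b"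
      show "a = b"
      proof (rule ccontr)
        assume "a \<noteq> b"
        then have "(of_nat b - of_nat a :: complex) \<noteq> 0" by simp
        with ab(3) have "t = (z a - z b) / (of_nat b - of_nat a)"
          unfolding line_def by (simp add: field_simps)
        with ab(1,2) \<open>t \<notin> B\<close> show False unfolding B_def by auto
      qed
    qed
    then show ?thesis using eq p[of t] q[of t] by simp
  qed
  then have "- B \<subseteq> {t. poly (p - q) t = 0}" by blast
  moreover have "infinite (- B)"
    using I infinite_UNIV_char_0 unfolding B_def Compl_eq_Diff_UNIV
    by (intro Diff_infinite_finite) auto
  ultimately have "p - q = 0" using poly_roots_finite by (metis infinite_super)
  then show ?thesis using p[of 0] q[of 0] by (simp add: line_def)
qed

lemma is_mpoly_imp_polyfun: "subring_C C \<Longrightarrow> is_mpoly N C p \<Longrightarrow> polyfun C N (meval N p)"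
  unfolding meval_def is_mpoly_def
  by (auto intro!: polyfun_sum polyfun_mult polyfun_const polyfun_prod polyfun_power polyfun_var)

lemma meval_superset:
  "finite S \<Longrightarrow> {\<alpha>. p \<alpha> \<noteq> 0} \<subseteq> S \<Longrightarrow> meval N p z = (\<Sum>\<alpha>\<in>S. p \<alpha> * (\<Prod>i<N. z i ^ \<alpha> i))"
  unfolding meval_def by (rule sum.mono_neutral_left) auto

lemma ex_mpoly_const:
  assumes "c \<in> C"
  shows "\<exists>p. is_mpoly N C p \<and> (\<forall>z. meval N p z = c)"
proof (intro exI conjI allI)
  let ?p = "\<lambda>\<alpha>. if \<alpha> = (\<lambda>_. 0) then c else 0"
  show "is_mpoly N C ?p"
    using assms unfolding is_mpoly_def by (auto intro: finite_subset[of _ "{\<lambda>_. 0}"])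
  show "meval N ?p z = c" for z
    by (subst meval_superset[of "{\<lambda>_. 0}"]) auto
qed

lemma ex_mpoly_var:
  assumes "subring_C C" "i < N"
  shows "\<exists>p. is_mpoly N C p \<and> (\<forall>z. meval N p z = z i)"
proof (intro exI conjI allI)
  define \<delta> where "\<delta> = (\<lambda>j. if j = i then 1 else 0 :: nat)"
  let ?p = "\<lambda>\<alpha>. if \<alpha> = \<delta> then 1 else 0"
  show "is_mpoly N C ?p"
    using assms subring_C_closed(2)[OF assms(1)] unfolding is_mpoly_def \<delta>_def
    by (auto intro: finite_subset[of _ "{\<delta>}"])
  show "meval N ?p z = z i" for z
  proof -
    have "meval N ?p z = (\<Prod>j<N. z j ^ \<delta> j)"
      by (subst meval_superset[of "{\<delta>}"]) auto
    also have "\<dots> = (\<Prod>j<N. if j = i then z j else 1)"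
      by (rule prod.cong) (auto simp: \<delta>_def)
    also have "\<dots> = z i" using assms(2) by (subst prod.delta) auto
    finally show ?thesis .
  qed
qed

lemma ex_mpoly_add:
  assumes C: "subring_C C" and p: "is_mpoly N C p" and q: "is_mpoly N C q"
  shows "\<exists>r. is_mpoly N C r \<and> (\<forall>z. meval N r z = meval N p z + meval N q z)"
proof (intro exI conjI allI)
  let ?S = "{\<alpha>. p \<alpha> \<noteq> 0} \<union> {\<alpha>. q \<alpha> \<noteq> 0}"
  have S: "finite ?S" using p q unfolding is_mpoly_def by auto
  have "p \<alpha> \<in> C" "q \<alpha> \<in> C" for \<alpha>
    using p q subring_C_closed(1)[OF C] unfolding is_mpoly_def by metis+
  then show "is_mpoly N C (\<lambda>\<alpha>. p \<alpha> + q \<alpha>)"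
    using p q subring_C_closed(4)[OF C] unfolding is_mpoly_def
    by (intro conjI allI impI finite_subset[OF _ S]) (auto, metis add.right_neutral)
  show "meval N (\<lambda>\<alpha>. p \<alpha> + q \<alpha>) z = meval N p z + meval N q z" for z
    by (subst (1 2 3) meval_superset[OF S]) (auto simp: distrib_right sum.distrib)
qed

definition mpoly_mult :: "mpoly \<Rightarrow> mpoly \<Rightarrow> mpoly" where
  "mpoly_mult p q \<gamma> = sum (\<lambda>(\<alpha>, \<beta>). p \<alpha> * q \<beta>) {(\<alpha>, \<beta>). p \<alpha> \<noteq> 0 \<and> q \<beta> \<noteq> 0 \<and> (\<lambda>i. \<alpha> i + \<beta> i) = \<gamma>}"

lemma mpoly_mult_nonzeroD:
  assumes "mpoly_mult p q \<gamma> \<noteq> 0"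
  obtains \<alpha> \<beta> where "p \<alpha> \<noteq> 0" "q \<beta> \<noteq> 0" "\<gamma> = (\<lambda>i. \<alpha> i + \<beta> i)"
proof -
  have "{(\<alpha>, \<beta>). p \<alpha> \<noteq> 0 \<and> q \<beta> \<noteq> 0 \<and> (\<lambda>i. \<alpha> i + \<beta> i) = \<gamma>} \<noteq> {}"
    using assms unfolding mpoly_mult_def by force
  then show ?thesis using that by auto
qed

lemma is_mpoly_mpoly_mult:
  assumes C: "subring_C C" and p: "is_mpoly N C p" and q: "is_mpoly N C q"
  shows "is_mpoly N C (mpoly_mult p q)"
  unfolding is_mpoly_def
proof (intro conjI allI impI)
  let ?T = "(\<lambda>(\<alpha>, \<beta>) i. \<alpha> i + \<beta> i) ` ({\<alpha>. p \<alpha> \<noteq> 0} \<times> {\<beta>. q \<beta> \<noteq> 0})"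
  have "{\<gamma>. mpoly_mult p q \<gamma> \<noteq> 0} \<subseteq> ?T"
    by (auto elim!: mpoly_mult_nonzeroD)
  moreover have "finite ?T" using p q unfolding is_mpoly_def by auto
  ultimately show "finite {\<gamma>. mpoly_mult p q \<gamma> \<noteq> 0}" by (rule finite_subset)
next
  fix \<gamma> i assume "mpoly_mult p q \<gamma> \<noteq> 0" "N \<le> i"
  then show "\<gamma> i = 0"
    using p q unfolding is_mpoly_def by (auto elim!: mpoly_mult_nonzeroD)
next
  fix \<gamma>
  show "mpoly_mult p q \<gamma> \<in> C" unfolding mpoly_mult_def using p q C
    by (intro subring_C_sum) (auto simp: is_mpoly_def intro: subring_C_closed)
qed

lemma meval_mpoly_mult:
  assumes p: "is_mpoly N C p" and q: "is_mpoly N C q"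
  shows "meval N (mpoly_mult p q) z = meval N p z * meval N q z"
proof -
  define Sp where "Sp = {\<alpha>. p \<alpha> \<noteq> 0}"
  define Sq where "Sq = {\<alpha>. q \<alpha> \<noteq> 0}"
  have fin: "finite Sp" "finite Sq" using p q unfolding is_mpoly_def Sp_def Sq_def by auto
  define plus_exp :: "(nat \<Rightarrow> nat) \<times> (nat \<Rightarrow> nat) \<Rightarrow> nat \<Rightarrow> nat"
    where "plus_exp = (\<lambda>(\<alpha>, \<beta>) i. \<alpha> i + \<beta> i)"
  define T where "T = plus_exp ` (Sp \<times> Sq)"
  have T: "finite T" using fin unfolding T_def by auto
  have fibre: "{(\<alpha>, \<beta>). p \<alpha> \<noteq> 0 \<and> q \<beta> \<noteq> 0 \<and> (\<lambda>i. \<alpha> i + \<beta> i) = \<gamma>} = {ab \<in> Sp \<times> Sq. plus_exp ab = \<gamma>}"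
    for \<gamma> unfolding Sp_def Sq_def plus_exp_def by auto
  let ?mon = "\<lambda>\<alpha>. \<Prod>i<N. z i ^ \<alpha> i"
  have mon_add: "?mon (plus_exp ab) = ?mon (fst ab) * ?mon (snd ab)" for ab
    unfolding plus_exp_def by (simp add: case_prod_beta power_add prod.distrib)
  have "meval N (mpoly_mult p q) z = (\<Sum>\<gamma>\<in>T. mpoly_mult p q \<gamma> * ?mon \<gamma>)"
    using T by (rule meval_superset) (auto simp: T_def plus_exp_def Sp_def Sq_def elim!: mpoly_mult_nonzeroD)
  also have "\<dots> = (\<Sum>\<gamma>\<in>T. \<Sum>ab\<in>{ab \<in> Sp \<times> Sq. plus_exp ab = \<gamma>}. p (fst ab) * q (snd ab) * ?mon (plus_exp ab))"
    unfolding mpoly_mult_def fibre sum_distrib_right by (intro sum.cong refl) (auto simp: case_prod_beta)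
  also have "\<dots> = (\<Sum>ab\<in>Sp \<times> Sq. p (fst ab) * q (snd ab) * ?mon (plus_exp ab))"
    using fin T unfolding T_def by (intro sum.group) auto
  also have "\<dots> = (\<Sum>ab\<in>Sp \<times> Sq. (p (fst ab) * ?mon (fst ab)) * (q (snd ab) * ?mon (snd ab)))"
    by (intro sum.cong refl) (simp add: mon_add mult_ac)
  also have "\<dots> = (\<Sum>\<alpha>\<in>Sp. p \<alpha> * ?mon \<alpha>) * (\<Sum>\<beta>\<in>Sq. q \<beta> * ?mon \<beta>)"
    by (simp add: sum_product sum.cartesian_product case_prod_beta)
  also have "\<dots> = meval N p z * meval N q z" unfolding meval_def Sp_def Sq_def ..
  finally show ?thesis .
qed

lemma polyfun_imp_mpoly:
  assumes "subring_C C" "polyfun C N f"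
  shows "\<exists>p. is_mpoly N C p \<and> meval N p = f"
  using assms(2)
proof (induction rule: polyfun.induct)
  case (polyfun_const c)
  then show ?case using ex_mpoly_const by fastforce
next
  case (polyfun_var i)
  then show ?case using ex_mpoly_var[OF assms(1)] by fastforce
next
  case (polyfun_add f g)
  then show ?case using ex_mpoly_add[OF assms(1)] by fastforce
next
  case (polyfun_mult f g)
  then show ?case using is_mpoly_mpoly_mult[OF assms(1)] meval_mpoly_mult by fastforce
qed

section \<open>Products of monic linear factors\<close>

lemma coeff_linear_mult:
  fixes q :: "'a :: comm_semiring_1 poly"
  shows "coeff ([:a, 1:] * q) k = a * coeff q k + (if k = 0 then 0 else coeff q (k - 1))"
  by (cases k) auto

lemma degree_prod_linear: "degree (\<Prod>x\<in>S. [:u x, 1 :: 'a :: idom:]) = card S"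
  by (subst degree_prod_sum_eq) auto

lemma lead_coeff_prod_linear: "lead_coeff (\<Prod>x\<in>S. [:u x, 1 :: 'a :: idom:]) = 1"
  by (simp add: lead_coeff_prod)

lemma polyfun_coeff_prod_linear:
  "subring_C C \<Longrightarrow> (\<And>x. x \<in> S \<Longrightarrow> polyfun C N (u x)) \<Longrightarrow>
    polyfun C N (\<lambda>z. coeff (\<Prod>x\<in>S. [:u x z, 1:]) k)"
proof (induction S arbitrary: k rule: infinite_finite_induct)
  case (infinite S)
  then show ?case by (auto intro: polyfun_const subring_C_closed simp: coeff_1)
next
  case empty
  then show ?case by (auto intro: polyfun_const subring_C_closed simp: coeff_1)
next
  case (insert a S)
  then show ?case
    by (cases k) (auto simp del: mult_pCons_left simp: coeff_linear_mult
        intro!: polyfun_add polyfun_mult polyfun_const subring_C_closed)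
qed

lemma polyfun_esym:
  "subring_C C \<Longrightarrow> (\<And>j. j < n \<Longrightarrow> polyfun C N (\<lambda>z. x z j)) \<Longrightarrow> polyfun C N (\<lambda>z. esym n (x z) r)"
  unfolding esym_def by (rule polyfun_coeff_prod_linear) auto

lemma esym_permute: "p permutes {..<n} \<Longrightarrow> esym n (x \<circ> p) r = esym n x r"
  unfolding esym_def using prod.permute[of p "{..<n}" "\<lambda>i. [:x i, 1:]"] by (simp add: comp_def)

lemma esym_0 [simp]: "esym n x 0 = 1"
  using lead_coeff_prod_linear[of x "{..<n}"] unfolding esym_def by (simp add: degree_prod_linear)

text \<open>The elementary symmetric polynomials of \<open>x\<^sub>1, \<dots>, x\<^sub>n\<close> in terms of those of
  \<open>x\<^sub>0, \<dots>, x\<^sub>n\<close> and \<open>x\<^sub>0\<close>: divide \<open>\<Prod>j\<le>n. (T + x\<^sub>j)\<close> by \<open>T + x\<^sub>0\<close>.\<close>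
lemma esym_Suc_shift:
  fixes x :: "nat \<Rightarrow> complex"
  shows "r \<le> n \<Longrightarrow> esym n (\<lambda>j. x (Suc j)) r = (\<Sum>l\<le>r. (- x 0) ^ l * esym (Suc n) x (r - l))"
proof (induction r)
  case 0
  then show ?case by simp
next
  case (Suc r)
  let ?Q = "\<Prod>j<n. [:x (Suc j), 1:]"
  have "esym (Suc n) x (Suc r) = coeff ([:x 0, 1:] * ?Q) (Suc n - Suc r)"
    unfolding esym_def by (simp only: prod.lessThan_Suc_shift)
  also have "\<dots> = x 0 * coeff ?Q (n - r) + coeff ?Q (n - Suc r)"
    using Suc.prems by (simp del: mult_pCons_left add: coeff_linear_mult Suc_diff_Suc)
  finally have rec: "esym n (\<lambda>j. x (Suc j)) (Suc r) =
      esym (Suc n) x (Suc r) - x 0 * esym n (\<lambda>j. x (Suc j)) r"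
    unfolding esym_def by simp
  have "(\<Sum>l\<le>Suc r. (- x 0) ^ l * esym (Suc n) x (Suc r - l)) =
      esym (Suc n) x (Suc r) + (\<Sum>l\<le>r. (- x 0) ^ Suc l * esym (Suc n) x (r - l))"
    by (subst sum.atMost_Suc_shift) simp
  also have "\<dots> = esym (Suc n) x (Suc r) - x 0 * (\<Sum>l\<le>r. (- x 0) ^ l * esym (Suc n) x (r - l))"
    by (simp add: sum_distrib_left mult_ac sum_negf)
  finally show ?case using rec Suc by simp
qed

text \<open>\<open>x\<^sub>0\<close> is a root of \<open>\<Prod>j\<le>n. (T - x\<^sub>j)\<close>, a monic polynomial with coefficients \<open>\<plusminus>\<sigma>\<^sub>j\<close>.\<close>
lemma esym_power_reduction:
  fixes x :: "nat \<Rightarrow> complex"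
  shows "x 0 ^ Suc n = (\<Sum>k\<le>n. (-1) ^ (n + k) * esym (Suc n) x (Suc n - k) * x 0 ^ k)"
proof -
  define P where "P = (\<Prod>j<Suc n. [:x j, 1:])"
  have deg: "degree P = Suc n" and top: "coeff P (Suc n) = 1"
    using degree_prod_linear[of x "{..<Suc n}"] lead_coeff_prod_linear[of x "{..<Suc n}"]
    unfolding P_def by simp_all
  have "poly P (- x 0) = 0"
    unfolding P_def by (simp only: prod.lessThan_Suc_shift poly_mult) simp
  then have root: "(- x 0) ^ Suc n = - (\<Sum>k\<le>n. coeff P k * (- x 0) ^ k)"
    using top by (simp add: poly_altdef deg add_eq_0_iff)
  have "x 0 ^ Suc n = (-1) ^ Suc n * (- x 0) ^ Suc n"
    by (simp flip: power_mult_distrib)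
  also have "\<dots> = (-1) ^ n * (\<Sum>k\<le>n. coeff P k * (- x 0) ^ k)"
    unfolding root by simp
  also have "\<dots> = (\<Sum>k\<le>n. (-1) ^ (n + k) * coeff P k * x 0 ^ k)"
    unfolding sum_distrib_left
    by (intro sum.cong refl) (simp add: power_add power_minus[of "x 0"] mult_ac)
  also have "\<dots> = (\<Sum>k\<le>n. (-1) ^ (n + k) * esym (Suc n) x (Suc n - k) * x 0 ^ k)"
    unfolding esym_def P_def by (intro sum.cong refl) (simp add: Suc_diff_le)
  finally show ?thesis .
qed

lemma norm_coeff_prod_linear_le:
  fixes u :: "'a \<Rightarrow> complex"
  assumes "finite S" "k \<le> card S" "s \<ge> 0" "\<And>x. x \<in> S \<Longrightarrow> cmod (u x) \<le> s"
  shows "cmod (coeff (\<Prod>x\<in>S. [:u x, 1:]) k) \<le> 2 ^ card S * s ^ (card S - k)"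
  using assms
proof (induction S arbitrary: k rule: finite_induct)
  case empty
  then show ?case by (simp add: coeff_1)
next
  case (insert a S)
  let ?Q = "\<Prod>x\<in>S. [:u x, 1:]"
  let ?c = "card S"
  have "cmod (u a * coeff ?Q k) \<le> 2 ^ ?c * s ^ (Suc ?c - k)"
  proof (cases "k \<le> ?c")
    case True
    then have "cmod (u a * coeff ?Q k) \<le> s * (2 ^ ?c * s ^ (?c - k))"
      unfolding norm_mult using insert by (intro mult_mono) auto
    then show ?thesis using True by (simp add: Suc_diff_le mult_ac)
  next
    case False
    then have "coeff ?Q k = 0" by (simp add: coeff_eq_0 degree_prod_linear)
    then show ?thesis using insert.prems by simp
  qed
  moreover have "cmod (if k = 0 then 0 else coeff ?Q (k - 1)) \<le> 2 ^ ?c * s ^ (Suc ?c - k)"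
    using insert.IH[of "k - 1"] insert.prems insert.hyps by (cases k) auto
  ultimately have "cmod (coeff ([:u a, 1:] * ?Q) k) \<le> 2 ^ ?c * s ^ (Suc ?c - k) + 2 ^ ?c * s ^ (Suc ?c - k)"
    unfolding coeff_linear_mult by (rule norm_triangle_le[OF add_mono])
  also have "\<dots> = 2 ^ Suc ?c * s ^ (Suc ?c - k)"
    by simp
  finally show ?case
    by (simp only: prod.insert[OF insert.hyps] card_insert_disjoint[OF insert.hyps])
qed

lemma norm_root_le:
  fixes p :: "complex poly"
  assumes root: "poly p t = 0" and monic: "lead_coeff p = 1" and B: "B \<ge> 0"
    and coeff_le: "\<And>k. k < degree p \<Longrightarrow> cmod (coeff p k) \<le> B ^ (degree p - k)"
  shows "cmod t \<le> 2 * B"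
proof (rule ccontr)
  define N where "N = degree p"
  assume "\<not> cmod t \<le> 2 * B"
  then have tB: "cmod t > 2 * B" and t0: "cmod t > 0" using B by auto
  have "t ^ N = - (\<Sum>k<N. coeff p k * t ^ k)"
    using root monic by (simp add: poly_altdef N_def lessThan_Suc_atMost[symmetric] add_eq_0_iff)
  then have "cmod t ^ N = cmod (\<Sum>k<N. coeff p k * t ^ k)" by (metis norm_minus_cancel norm_power)
  also have "\<dots> \<le> (\<Sum>k<N. cmod (coeff p k) * cmod t ^ k)"
    by (rule order_trans[OF norm_sum]) (simp add: norm_mult norm_power)
  also have "\<dots> \<le> (\<Sum>k<N. (cmod t / 2) ^ (N - k) * cmod t ^ k)"
  proof (intro sum_mono mult_right_mono)
    fix k assume "k \<in> {..<N}"
    then have "cmod (coeff p k) \<le> B ^ (N - k)" using coeff_le by (auto simp: N_def)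
    also have "\<dots> \<le> (cmod t / 2) ^ (N - k)" using B tB by (intro power_mono) auto
    finally show "cmod (coeff p k) \<le> (cmod t / 2) ^ (N - k)" .
  qed simp
  also have "\<dots> = cmod t ^ N * (\<Sum>k<N. (1 / 2) ^ (N - k))"
    unfolding sum_distrib_left
    by (intro sum.cong refl) (simp add: power_divide power_add[symmetric])
  also have "(\<Sum>k<N. (1 / 2 :: real) ^ (N - k)) = (\<Sum>k<N. (1 / 2) ^ Suc k)"
    by (subst sum.nat_diff_reindex[symmetric]) (simp add: Suc_diff_Suc)
  also have "\<dots> = 1 - (1 / 2) ^ N"
    by (induction N) simp_all
  also have "\<dots> < 1"
    by simp
  finally show False using t0 by simp
qed

section \<open>Symmetric polynomial functions\<close>

text \<open>Symmetry in the block \<open>z\<^sub>m, \<dots>, z\<^sub>m\<^sub>+\<^sub>n\<^sub>-\<^sub>1\<close>, tested on transpositions so that it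
  passes to sub-blocks.\<close>
definition symmetric_in :: "nat \<Rightarrow> nat \<Rightarrow> ((nat \<Rightarrow> complex) \<Rightarrow> 'a) \<Rightarrow> bool" where
  "symmetric_in m n \<phi> \<longleftrightarrow>
     (\<forall>a\<in>{m..<m + n}. \<forall>b\<in>{m..<m + n}. \<forall>z. \<phi> (z \<circ> transpose a b) = \<phi> z)"

lemma permvars_permvars:
  assumes "\<pi> permutes {..<n}"
  shows "permvars m n \<pi> (permvars m n \<tau> z) = permvars m n (\<tau> \<circ> \<pi>) z"
proof
  fix i
  show "permvars m n \<pi> (permvars m n \<tau> z) i = permvars m n (\<tau> \<circ> \<pi>) z i"
  proof (cases "m \<le> i \<and> i < m + n")
    case True
    then have "i - m < n" by linarith
    then have "\<pi> (i - m) < n" using permutes_in_image[OF assms, of "i - m"] by simp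
    with True show ?thesis by (simp add: permvars_def)
  next
    case False
    then show ?thesis by (auto simp: permvars_def)
  qed
qed

lemma comp_transpose_eq_permvars:
  assumes "a \<in> {m..<m + n}" "b \<in> {m..<m + n}"
  shows "z \<circ> transpose a b = permvars m n (transpose (a - m) (b - m)) z"
proof
  fix i
  show "(z \<circ> transpose a b) i = permvars m n (transpose (a - m) (b - m)) z i"
  proof (cases "m \<le> i \<and> i < m + n")
    case True
    then have "transpose a b i = m + transpose (a - m) (b - m) (i - m)"
      using assms unfolding transpose_def by auto
    then show ?thesis using True unfolding permvars_def by simp
  next
    case False
    then have "transpose a b i = i" using assms by (intro transpose_apply_other) auto
    then show ?thesis using False unfolding permvars_def by auto
  qed
qed

lemma symmetric_inI_permvars:
  assumes "\<And>\<pi> z. \<pi> permutes {..<n} \<Longrightarrow> \<phi> (permvars m n \<pi> z) = \<phi> z"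
  shows "symmetric_in m n \<phi>"
  unfolding symmetric_in_def
proof (intro ballI allI)
  fix a b z assume ab: "a \<in> {m..<m + n}" "b \<in> {m..<m + n}"
  then have "transpose (a - m) (b - m) permutes {..<n}"
    by (intro permutes_swap_id) auto
  then show "\<phi> (z \<circ> transpose a b) = \<phi> z"
    unfolding comp_transpose_eq_permvars[OF ab] by (rule assms)
qed

lemma symvars_permvars:
  assumes "\<pi> permutes {..<n}"
  shows "symvars m n (permvars m n \<pi> z) = symvars m n z"
proof -
  have "permvars m n \<pi> z (m + j) = ((\<lambda>j. z (m + j)) \<circ> \<pi>) j" for j
    using permutes_not_in[OF assms, of j] by (cases "j < n") (simp_all add: permvars_def)
  then have esym_eq: "esym n (\<lambda>j. permvars m n \<pi> z (m + j)) r = esym n (\<lambda>j. z (m + j)) r" for r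
    using esym_permute[OF assms] by presburger
  have low: "permvars m n \<pi> z i = z i" if "i < m" for i
    using that by (simp add: permvars_def)
  show ?thesis
    unfolding symvars_def esym_eq by (rule ext) (simp add: low)
qed

lemma symmetric_in_symvars: "symmetric_in m n (symvars m n)"
  by (rule symmetric_inI_permvars) (rule symvars_permvars)

lemma symvars_low [simp]: "i < m \<Longrightarrow> symvars m n z i = z i"
  by (simp add: symvars_def)

lemma symvars_esym: "j < n \<Longrightarrow> symvars m n z (m + j) = esym n (\<lambda>i. z (m + i)) (Suc j)"
  by (simp add: symvars_def)

lemma polyfun_symvars:
  assumes "subring_C C" "i < m + n"
  shows "polyfun C (m + n) (\<lambda>z. symvars m n z i)"
proof (cases "i < m")
  case True
  then show ?thesis by (simp add: polyfun_var)
next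
  case False
  then have "polyfun C (m + n) (\<lambda>z. esym n (\<lambda>j. z (m + j)) (Suc (i - m)))"
    by (intro polyfun_esym assms(1) polyfun_var) auto
  then show ?thesis using False assms(2) symvars_esym[of "i - m" n m] by simp
qed

lemma polyfun_permvars:
  assumes "\<pi> permutes {..<n}" "polyfun C (m + n) f"
  shows "polyfun C (m + n) (\<lambda>z. f (permvars m n \<pi> z))"
proof (rule polyfun_subst[OF assms(2)])
  fix i assume i: "i < m + n"
  show "polyfun C (m + n) (\<lambda>z. permvars m n \<pi> z i)"
  proof (cases "i < m")
    case True
    then show ?thesis unfolding permvars_def by (simp add: polyfun_var)
  next
    case False
    have "\<pi> (i - m) < n" using False i permutes_in_image[OF assms(1), of "i - m"] by simp
    then have "polyfun C (m + n) (\<lambda>z. z (m + \<pi> (i - m)))" by (intro polyfun_var) auto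
    then show ?thesis unfolding permvars_def using False i by simp
  qed
qed

definition reduced_in_x0 :: "complex set \<Rightarrow> nat \<Rightarrow> nat \<Rightarrow> ((nat \<Rightarrow> complex) \<Rightarrow> complex) \<Rightarrow> bool" where
  "reduced_in_x0 C m n h \<longleftrightarrow> (\<exists>d. (\<forall>k\<le>n. polyfun C (m + Suc n) (d k)) \<and>
     (\<forall>z. h z = (\<Sum>k\<le>n. d k (symvars m (Suc n) z) * z m ^ k)))"

lemma reduced_in_x0_cong: "reduced_in_x0 C m n h \<Longrightarrow> (\<And>z. h z = g z) \<Longrightarrow> reduced_in_x0 C m n g"
  unfolding reduced_in_x0_def by metis

lemma reduced_in_x0_symvars:
  assumes "subring_C C" "polyfun C (m + Suc n) e"
  shows "reduced_in_x0 C m n (\<lambda>z. e (symvars m (Suc n) z))"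
  unfolding reduced_in_x0_def
proof (intro exI conjI allI impI)
  let ?d = "\<lambda>k w. if k = 0 then e w else 0"
  show "polyfun C (m + Suc n) (?d k)" if "k \<le> n" for k
    using assms by (cases "k = 0") (auto intro: polyfun_const subring_C_closed)
  show "e (symvars m (Suc n) z) = (\<Sum>k\<le>n. ?d k (symvars m (Suc n) z) * z m ^ k)" for z
    by (simp add: if_distrib[of "\<lambda>x. x * _"] cong: if_cong)
qed

lemma reduced_in_x0_const: "subring_C C \<Longrightarrow> c \<in> C \<Longrightarrow> reduced_in_x0 C m n (\<lambda>z. c)"
  using reduced_in_x0_symvars[of C m n "\<lambda>w. c"] by (simp add: polyfun_const)

lemma reduced_in_x0_add:
  assumes "reduced_in_x0 C m n h" "reduced_in_x0 C m n g"
  shows "reduced_in_x0 C m n (\<lambda>z. h z + g z)"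
proof -
  obtain d d' where d: "\<forall>k\<le>n. polyfun C (m + Suc n) (d k)"
      "\<forall>z. h z = (\<Sum>k\<le>n. d k (symvars m (Suc n) z) * z m ^ k)"
    and d': "\<forall>k\<le>n. polyfun C (m + Suc n) (d' k)"
      "\<forall>z. g z = (\<Sum>k\<le>n. d' k (symvars m (Suc n) z) * z m ^ k)"
    using assms unfolding reduced_in_x0_def by blast
  show ?thesis unfolding reduced_in_x0_def
    by (rule exI[of _ "\<lambda>k w. d k w + d' k w"])
      (use d d' in \<open>auto intro: polyfun_add simp: distrib_right sum.distrib\<close>)
qed

lemma reduced_in_x0_scale:
  assumes "polyfun C (m + Suc n) e" "reduced_in_x0 C m n h"
  shows "reduced_in_x0 C m n (\<lambda>z. e (symvars m (Suc n) z) * h z)"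
proof -
  obtain d where d: "\<forall>k\<le>n. polyfun C (m + Suc n) (d k)"
      "\<forall>z. h z = (\<Sum>k\<le>n. d k (symvars m (Suc n) z) * z m ^ k)"
    using assms(2) unfolding reduced_in_x0_def by blast
  show ?thesis unfolding reduced_in_x0_def
    by (rule exI[of _ "\<lambda>k w. e w * d k w"])
      (use d assms(1) in \<open>auto intro: polyfun_mult simp: sum_distrib_left mult_ac\<close>)
qed

lemma reduced_in_x0_sum:
  "subring_C C \<Longrightarrow> (\<And>x. x \<in> S \<Longrightarrow> reduced_in_x0 C m n (f x)) \<Longrightarrow>
    reduced_in_x0 C m n (\<lambda>z. \<Sum>x\<in>S. f x z)"
  by (induction S rule: infinite_finite_induct)
    (auto intro: reduced_in_x0_add reduced_in_x0_const subring_C_closed)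

lemma power_Suc_eq_symvars:
  "z m ^ Suc n = (\<Sum>k\<le>n. (-1) ^ (n + k) * symvars m (Suc n) z (m + (n - k)) * z m ^ k)"
proof -
  have "z m ^ Suc n = (\<Sum>k\<le>n. (-1) ^ (n + k) * esym (Suc n) (\<lambda>j. z (m + j)) (Suc n - k) * z m ^ k)"
    using esym_power_reduction[of "\<lambda>j. z (m + j)" n] by simp
  also have "\<dots> = (\<Sum>k\<le>n. (-1) ^ (n + k) * symvars m (Suc n) z (m + (n - k)) * z m ^ k)"
    by (intro sum.cong refl) (simp add: symvars_esym Suc_diff_le del: add_diff_assoc)
  finally show ?thesis .
qed

lemma reduced_in_x0_mult_x0:
  assumes C: "subring_C C" and h: "reduced_in_x0 C m n h"
  shows "reduced_in_x0 C m n (\<lambda>z. z m * h z)"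
proof -
  obtain d where d: "\<forall>k\<le>n. polyfun C (m + Suc n) (d k)"
      "\<forall>z. h z = (\<Sum>k\<le>n. d k (symvars m (Suc n) z) * z m ^ k)"
    using h unfolding reduced_in_x0_def by blast
  define r where "r k w = (-1) ^ (n + k) * w (m + (n - k))" for k and w :: "nat \<Rightarrow> complex"
  have r: "polyfun C (m + Suc n) (r k)" if "k \<le> n" for k
    unfolding r_def using that
    by (intro polyfun_mult polyfun_power polyfun_const polyfun_var subring_C_closed C) auto
  define d' where "d' k w = (if k = 0 then 0 else d (k - 1) w) + d n w * r k w" for k w
  show ?thesis unfolding reduced_in_x0_def
  proof (intro exI[of _ d'] conjI allI impI)
    fix k assume "k \<le> n"
    then show "polyfun C (m + Suc n) (d' k)"
      unfolding d'_def using d(1) r C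
      by (cases "k = 0") (auto intro!: polyfun_add polyfun_mult polyfun_const subring_C_closed)
  next
    fix z
    let ?s = "symvars m (Suc n) z"
    have "z m * h z = (\<Sum>k\<le>n. d k ?s * z m ^ Suc k)"
      using d(2) by (simp add: sum_distrib_left mult_ac)
    also have "\<dots> = (\<Sum>k<n. d k ?s * z m ^ Suc k) + d n ?s * z m ^ Suc n"
      by (simp add: lessThan_Suc_atMost[symmetric])
    also have "(\<Sum>k<n. d k ?s * z m ^ Suc k) = (\<Sum>k\<le>n. (if k = 0 then 0 else d (k - 1) ?s) * z m ^ k)"
      by (simp only: lessThan_Suc_atMost[symmetric] sum.lessThan_Suc_shift) simp
    also have "d n ?s * z m ^ Suc n = (\<Sum>k\<le>n. d n ?s * r k ?s * z m ^ k)"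
      unfolding power_Suc_eq_symvars[of z m n] r_def by (simp add: sum_distrib_left mult_ac)
    finally show "z m * h z = (\<Sum>k\<le>n. d' k ?s * z m ^ k)"
      unfolding d'_def by (simp add: distrib_right sum.distrib)
  qed
qed

lemma reduced_in_x0_mult_x0_power:
  "subring_C C \<Longrightarrow> reduced_in_x0 C m n h \<Longrightarrow> reduced_in_x0 C m n (\<lambda>z. z m ^ j * h z)"
  by (induction j) (auto simp: mult.assoc dest: reduced_in_x0_mult_x0)

lemma reduced_in_x0_mult:
  assumes C: "subring_C C" and h: "reduced_in_x0 C m n h" and g: "reduced_in_x0 C m n g"
  shows "reduced_in_x0 C m n (\<lambda>z. h z * g z)"
proof -
  obtain d where d: "\<forall>k\<le>n. polyfun C (m + Suc n) (d k)"
      "\<forall>z. h z = (\<Sum>k\<le>n. d k (symvars m (Suc n) z) * z m ^ k)"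
    using h unfolding reduced_in_x0_def by blast
  have "reduced_in_x0 C m n (\<lambda>z. \<Sum>k\<le>n. d k (symvars m (Suc n) z) * (z m ^ k * g z))"
    using d(1) by (intro reduced_in_x0_sum reduced_in_x0_scale reduced_in_x0_mult_x0_power C g) auto
  then show ?thesis
    by (rule reduced_in_x0_cong) (simp add: d(2) sum_distrib_right mult.assoc)
qed

lemma reduced_in_x0_power:
  "subring_C C \<Longrightarrow> reduced_in_x0 C m n h \<Longrightarrow> reduced_in_x0 C m n (\<lambda>z. h z ^ j)"
  by (induction j) (auto intro: reduced_in_x0_mult reduced_in_x0_const subring_C_closed)

lemma reduced_in_x0_esym:
  assumes C: "subring_C C" and s: "s \<le> Suc n"
  shows "reduced_in_x0 C m n (\<lambda>z. esym (Suc n) (\<lambda>j. z (m + j)) s)"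
proof (cases s)
  case 0
  then show ?thesis using reduced_in_x0_const[OF C subring_C_closed(2)[OF C]] by simp
next
  case (Suc j)
  have "polyfun C (m + Suc n) (\<lambda>w. w (m + j))" using s Suc by (intro polyfun_var) auto
  from reduced_in_x0_symvars[OF C this] show ?thesis
    using s Suc by (simp add: symvars_esym)
qed

lemma reduced_in_x0_esym_tail:
  assumes C: "subring_C C" and r: "r \<le> n"
  shows "reduced_in_x0 C m n (\<lambda>z. esym n (\<lambda>j. z (Suc m + j)) r)"
proof -
  have "reduced_in_x0 C m n (\<lambda>z. - z m)"
    using reduced_in_x0_mult_x0[OF C reduced_in_x0_const[OF C subring_C_closed(3)[OF C]]]
    by (rule reduced_in_x0_cong) simp
  then have red: "reduced_in_x0 C m n (\<lambda>z. \<Sum>l\<le>r. (- z m) ^ l * esym (Suc n) (\<lambda>j. z (m + j)) (r - l))"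
    using r by (intro reduced_in_x0_sum C reduced_in_x0_mult reduced_in_x0_power reduced_in_x0_esym) auto
  have eq: "esym n (\<lambda>j. z (Suc m + j)) r =
      (\<Sum>l\<le>r. (- z m) ^ l * esym (Suc n) (\<lambda>j. z (m + j)) (r - l))" for z
    using esym_Suc_shift[OF r, of "\<lambda>j. z (m + j)"] by simp
  from red show ?thesis
    by (rule reduced_in_x0_cong) (simp only: eq)
qed

lemma reduced_in_x0_polyfun_symvars_Suc:
  assumes C: "subring_C C" and \<psi>: "polyfun C (Suc m + n) \<psi>"
  shows "reduced_in_x0 C m n (\<lambda>z. \<psi> (symvars (Suc m) n z))"
  using \<psi>
proof (induction rule: polyfun.induct)
  case (polyfun_const c)
  then show ?case using reduced_in_x0_const[OF C] by simp
next
  case (polyfun_add f g)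
  then show ?case using reduced_in_x0_add by simp
next
  case (polyfun_mult f g)
  then show ?case using reduced_in_x0_mult[OF C] by simp
next
  case (polyfun_var i)
  consider "i < m" | "i = m" | "m < i" by linarith
  then show ?case
  proof cases
    case 1
    then have "polyfun C (m + Suc n) (\<lambda>w. w i)" by (intro polyfun.polyfun_var) auto
    from reduced_in_x0_symvars[OF C this] show ?thesis
      by (rule reduced_in_x0_cong) (use 1 in simp)
  next
    case 2
    from reduced_in_x0_mult_x0[OF C reduced_in_x0_const[OF C subring_C_closed(2)[OF C]]]
    show ?thesis by (rule reduced_in_x0_cong) (use 2 in simp)
  next
    case 3
    with polyfun_var have "symvars (Suc m) n z i = esym n (\<lambda>j. z (Suc m + j)) (i - m)" for z
      using symvars_esym[of "i - Suc m" n "Suc m" z] by (simp add: Suc_diff_Suc)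
    with reduced_in_x0_esym_tail[OF C, of "i - m" n m] polyfun_var show ?thesis
      by simp
  qed
qed

text \<open>The polynomial \<open>\<Sum>k\<le>n. d\<^sub>k(\<sigma>) T\<^sup>k - \<phi>\<close> of degree \<open>\<le> n\<close> vanishes at the \<open>n + 1\<close>
  distinct points \<open>x\<^sub>0, \<dots>, x\<^sub>n\<close>, by symmetry of \<open>\<phi>\<close> and \<open>\<sigma>\<close>.\<close>
lemma symmetric_reduced_eq_coeff0:
  assumes sym: "symmetric_in m (Suc n) \<phi>"
    and \<phi>: "\<And>z. \<phi> z = (\<Sum>k\<le>n. d k (symvars m (Suc n) z) * z m ^ k)"
    and inj: "inj_on z {m..m + n}"
  shows "\<phi> z = d 0 (symvars m (Suc n) z)"
proof -
  let ?s = "symvars m (Suc n) z"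
  define q where "q = (\<Sum>k\<le>n. monom (d k ?s) k) - [:\<phi> z:]"
  have roots: "poly q (z i) = 0" if "i \<in> {m..m + n}" for i
  proof -
    let ?z = "z \<circ> transpose m i"
    have "\<phi> z = \<phi> ?z" using sym that unfolding symmetric_in_def by auto
    also have "\<dots> = (\<Sum>k\<le>n. d k ?s * z i ^ k)"
      using symmetric_in_symvars[of m "Suc n"] that unfolding \<phi> symmetric_in_def by auto
    finally show ?thesis unfolding q_def by (simp add: poly_sum poly_monom)
  qed
  have deg: "degree q \<le> n"
    unfolding q_def by (intro degree_diff_le degree_sum_le) (auto intro: order_trans[OF degree_monom_le])
  have "q = 0"
  proof (rule ccontr)
    assume "q \<noteq> 0"
    have "Suc n = card (z ` {m..m + n})" using card_image[OF inj] by simp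
    also have "\<dots> \<le> card {x. poly q x = 0}"
      using roots by (intro card_mono poly_roots_finite \<open>q \<noteq> 0\<close>) auto
    also have "\<dots> \<le> degree q" by (rule card_poly_roots_bound[OF \<open>q \<noteq> 0\<close>])
    finally show False using deg by simp
  qed
  then have "coeff q 0 = 0" by simp
  then show ?thesis unfolding q_def by (simp add: coeff_sum coeff_monom)
qed

theorem symmetric_polyfun_eq_esym:
  assumes C: "subring_C C" and "polyfun C (m + n) \<phi>" "symmetric_in m n \<phi>"
  shows "\<exists>\<psi>. polyfun C (m + n) \<psi> \<and> (\<forall>z. \<phi> z = \<psi> (symvars m n z))"
  using assms(2,3)
proof (induction n arbitrary: m \<phi>)
  case 0
  have "\<phi> z = \<phi> (symvars m 0 z)" for z
    using polyfun_cong_vars[OF 0(1), of z "symvars m 0 z"] by simp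
  then show ?case using 0 by auto
next
  case (Suc n)
  have "symmetric_in (Suc m) n \<phi>" using Suc.prems(2) unfolding symmetric_in_def by auto
  with Suc.prems(1) obtain \<psi> where \<psi>: "polyfun C (Suc m + n) \<psi>" "\<forall>z. \<phi> z = \<psi> (symvars (Suc m) n z)"
    using Suc.IH[of "Suc m" \<phi>] by auto
  have "reduced_in_x0 C m n \<phi>"
    using reduced_in_x0_polyfun_symvars_Suc[OF C \<psi>(1)] by (rule reduced_in_x0_cong) (simp add: \<psi>(2))
  then obtain d where d: "\<forall>k\<le>n. polyfun C (m + Suc n) (d k)"
      "\<And>z. \<phi> z = (\<Sum>k\<le>n. d k (symvars m (Suc n) z) * z m ^ k)"
    unfolding reduced_in_x0_def by blast
  have d0: "polyfun C (m + Suc n) (\<lambda>z. d 0 (symvars m (Suc n) z))"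
  proof (rule polyfun_subst[where f = "d 0" and \<rho> = "symvars m (Suc n)"])
    show "polyfun C (m + Suc n) (d 0)" using d(1) by simp
    show "polyfun C (m + Suc n) (\<lambda>z. symvars m (Suc n) z i)" if "i < m + Suc n" for i
      by (rule polyfun_symvars[OF C that])
  qed
  have "\<phi> z = d 0 (symvars m (Suc n) z)" for z
    by (rule polyfun_eqI_on_injective[OF Suc.prems(1) d0 finite_atLeastAtMost])
      (rule symmetric_reduced_eq_coeff0[OF Suc.prems(2) d(2)])
  then show ?case using d(1) by auto
qed

section \<open>Orbit polynomials\<close>

definition sqnorm_sum :: "nat \<Rightarrow> mpoly list \<Rightarrow> (nat \<Rightarrow> complex) \<Rightarrow> real" where
  "sqnorm_sum N ps z = (\<Sum>p\<leftarrow>ps. (cmod (meval N p z))\<^sup>2)"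

lemma sqnorm_sum_nonneg: "sqnorm_sum N ps z \<ge> 0"
  unfolding sqnorm_sum_def by (induction ps) auto

lemma apow_eq_sqnorm_sum: "\<epsilon> \<noteq> 0 \<Longrightarrow> apow N ps \<epsilon> z = sqnorm_sum N ps z powr (\<epsilon> / 2)"
  unfolding apow_def sqnorm_sum_def by simp

lemma sqnorm_sum_conv_nth: "sqnorm_sum N ps z = (\<Sum>i<length ps. (cmod (meval N (ps ! i) z))\<^sup>2)"
  unfolding sqnorm_sum_def sum_list_sum_nth by (simp add: atLeast0LessThan)

definition orbit_poly ::
    "nat \<Rightarrow> nat \<Rightarrow> ((nat \<Rightarrow> complex) \<Rightarrow> complex) \<Rightarrow> (nat \<Rightarrow> complex) \<Rightarrow> complex poly" where
  "orbit_poly m n f z = (\<Prod>\<pi> | \<pi> permutes {..<n}. [:f (permvars m n \<pi> z), 1:])"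

lemma orbit_poly_permvars:
  assumes "\<tau> permutes {..<n}"
  shows "orbit_poly m n f (permvars m n \<tau> z) = orbit_poly m n f z"
proof -
  have "orbit_poly m n f (permvars m n \<tau> z) = (\<Prod>\<pi> | \<pi> permutes {..<n}. [:f (permvars m n (\<tau> \<circ> \<pi>) z), 1:])"
    unfolding orbit_poly_def by (intro prod.cong refl) (simp add: permvars_permvars)
  also have "\<dots> = orbit_poly m n f z"
    unfolding orbit_poly_def
    by (rule prod.reindex_bij_witness[of _ "\<lambda>\<pi>. inv \<tau> \<circ> \<pi>" "\<lambda>\<pi>. \<tau> \<circ> \<pi>"])
      (auto simp: o_assoc permutes_inv_o[OF assms] intro: permutes_compose permutes_inv assms)
  finally show ?thesis .
qed

lemma degree_orbit_poly: "degree (orbit_poly m n f z) = fact n"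
  unfolding orbit_poly_def degree_prod_linear by (simp add: card_permutations)

lemma lead_coeff_orbit_poly: "lead_coeff (orbit_poly m n f z) = 1"
  unfolding orbit_poly_def by (rule lead_coeff_prod_linear)

lemma poly_orbit_poly_minus_self: "poly (orbit_poly m n f z) (- f z) = 0"
proof -
  have "permvars m n id z = z" by (simp add: permvars_def fun_eq_iff)
  then show ?thesis
    unfolding orbit_poly_def poly_prod by (intro prod_zero finite_permutations bexI[of _ id]) auto
qed

lemma polyfun_coeff_orbit_poly_symvars:
  assumes C: "subring_C C" and f: "polyfun C (m + n) f"
  shows "\<exists>\<psi>. polyfun C (m + n) \<psi> \<and> (\<forall>z. coeff (orbit_poly m n f z) j = \<psi> (symvars m n z))"
proof (rule symmetric_polyfun_eq_esym[OF C])
  show "polyfun C (m + n) (\<lambda>z. coeff (orbit_poly m n f z) j)"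
    unfolding orbit_poly_def
    by (intro polyfun_coeff_prod_linear C polyfun_permvars[OF _ f]) simp
  show "symmetric_in m n (\<lambda>z. coeff (orbit_poly m n f z) j)"
    by (intro symmetric_inI_permvars) (simp add: orbit_poly_permvars)
qed

lemma norm_coeff_orbit_poly_le:
  assumes "s \<ge> 0" "\<And>\<pi>. \<pi> permutes {..<n} \<Longrightarrow> cmod (f (permvars m n \<pi> z)) \<le> s" "j \<le> fact n"
  shows "cmod (coeff (orbit_poly m n f z) (fact n - j)) \<le> 2 ^ fact n * s ^ j"
proof -
  let ?P = "{\<pi>. \<pi> permutes {..<n}}"
  have "card ?P = fact n" by (simp add: card_permutations)
  moreover have "cmod (coeff (orbit_poly m n f z) (fact n - j)) \<le> 2 ^ card ?P * s ^ (card ?P - (fact n - j))"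
    unfolding orbit_poly_def using assms \<open>card ?P = fact n\<close>
    by (intro norm_coeff_prod_linear_le finite_permutations) auto
  ultimately show ?thesis using assms(3) by simp
qed

lemma norm_le_of_orbit_poly_coeff_le:
  assumes "B \<ge> 0" "\<And>j. j \<in> {1..fact n} \<Longrightarrow> cmod (coeff (orbit_poly m n f z) (fact n - j)) \<le> B ^ j"
  shows "cmod (f z) \<le> 2 * B"
proof -
  have "cmod (- f z) \<le> 2 * B"
  proof (rule norm_root_le[OF poly_orbit_poly_minus_self[of m n f z] lead_coeff_orbit_poly assms(1)])
    fix k assume "k < degree (orbit_poly m n f z)"
    then show "cmod (coeff (orbit_poly m n f z) k) \<le> B ^ (degree (orbit_poly m n f z) - k)"
      using assms(2)[of "fact n - k"] by (simp add: degree_orbit_poly)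
  qed
  then show ?thesis by simp
qed

text \<open>The coefficient of \<open>T\<^sup>N\<^sup>-\<^sup>j\<close> in \<open>orbit_poly\<close> (\<open>N = n!\<close>) is homogeneous of degree \<open>j\<close> in the
  roots, so with \<open>L = N!\<close> each summand below is homogeneous of degree \<open>2L\<close>, like
  \<open>(\<Sum>\<^sub>i |f\<^sub>i|\<^sup>2)\<^sup>L\<close>.\<close>
definition orbit_gauge :: "nat \<Rightarrow> nat \<Rightarrow> mpoly list \<Rightarrow> (nat \<Rightarrow> complex) \<Rightarrow> real" where
  "orbit_gauge m n fs z = (\<Sum>(i, j) \<in> {..<length fs} \<times> {1..fact n}.
     cmod (coeff (orbit_poly m n (meval (m + n) (fs ! i)) z) (fact n - j)) ^ (2 * (fact (fact n) div j)))"

lemma mult_fact_fact_div: "j \<in> {1..fact n} \<Longrightarrow> j * (fact (fact n) div j) = (fact (fact n) :: nat)"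
  using dvd_fact[of j "fact n"] by simp

lemma orbit_gauge_le:
  assumes sym: "\<And>\<pi>. \<pi> permutes {..<n} \<Longrightarrow> sqnorm_sum (m + n) fs (permvars m n \<pi> z) = sqnorm_sum (m + n) fs z"
  defines "N \<equiv> fact n :: nat" and "L \<equiv> fact (fact n :: nat) :: nat"
  shows "orbit_gauge m n fs z \<le> real (length fs) * N * 4 ^ (N * L) * sqnorm_sum (m + n) fs z ^ L"
proof -
  define S where "S = sqnorm_sum (m + n) fs z"
  have S: "S \<ge> 0" unfolding S_def by (rule sqnorm_sum_nonneg)
  have root_le: "cmod (meval (m + n) (fs ! i) (permvars m n \<pi> z)) \<le> sqrt S"
    if "i < length fs" "\<pi> permutes {..<n}" for i \<pi>
  proof (rule real_le_rsqrt)
    have "(cmod (meval (m + n) (fs ! i) (permvars m n \<pi> z)))\<^sup>2 \<le> sqnorm_sum (m + n) fs (permvars m n \<pi> z)"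
      unfolding sqnorm_sum_conv_nth using that(1) by (intro member_le_sum) auto
    then show "(cmod (meval (m + n) (fs ! i) (permvars m n \<pi> z)))\<^sup>2 \<le> S"
      unfolding S_def sym[OF that(2)] .
  qed
  have "cmod (coeff (orbit_poly m n (meval (m + n) (fs ! i)) z) (N - j)) ^ (2 * (L div j)) \<le> 4 ^ (N * L) * S ^ L"
    if "i < length fs" "j \<in> {1..N}" for i j
  proof -
    let ?q = "L div j"
    have "cmod (coeff (orbit_poly m n (meval (m + n) (fs ! i)) z) (N - j)) ^ (2 * ?q) \<le> (2 ^ N * sqrt S ^ j) ^ (2 * ?q)"
      using that root_le S unfolding N_def by (intro power_mono norm_coeff_orbit_poly_le) auto
    also have "\<dots> = 2 ^ (N * (2 * ?q)) * (sqrt S ^ 2) ^ (j * ?q)"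
      by (simp add: power_mult_distrib flip: power_mult) (simp add: mult_ac)
    also have "\<dots> = 4 ^ (N * ?q) * S ^ L"
      using S mult_fact_fact_div[of j n] that(2)
      by (simp add: N_def L_def mult.left_commute[of "fact n" 2] power_mult)
    also have "\<dots> \<le> 4 ^ (N * L) * S ^ L"
      using S by (intro mult_right_mono power_increasing) auto
    finally show ?thesis .
  qed
  then have "orbit_gauge m n fs z \<le> card ({..<length fs} \<times> {1..N}) * (4 ^ (N * L) * S ^ L)"
    unfolding orbit_gauge_def N_def[symmetric] L_def[folded N_def, symmetric]
    by (intro sum_bounded_above) auto
  then show ?thesis unfolding S_def by (simp add: card_cartesian_product mult_ac)
qed

lemma sqnorm_sum_power_le_orbit_gauge:
  fixes n :: nat
  defines "L \<equiv> fact (fact n :: nat) :: nat"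
  shows "sqnorm_sum (m + n) fs z ^ L \<le> (4 * real (length fs)) ^ L * orbit_gauge m n fs z"
proof -
  define G where "G = orbit_gauge m n fs z"
  have G: "G \<ge> 0" unfolding G_def orbit_gauge_def by (intro sum_nonneg) auto
  define B where "B = root (2 * L) G"
  have B: "B \<ge> 0" "B ^ (2 * L) = G" unfolding B_def L_def using G by simp_all
  have "cmod (meval (m + n) (fs ! i) z) \<le> 2 * B" if "i < length fs" for i
  proof (rule norm_le_of_orbit_poly_coeff_le[where f = "meval (m + n) (fs ! i)" and z = z, OF B(1)])
    fix j :: nat assume j: "j \<in> {1..fact n}"
    let ?c = "cmod (coeff (orbit_poly m n (meval (m + n) (fs ! i)) z) (fact n - j))"
    let ?t = "\<lambda>(i, j). cmod (coeff (orbit_poly m n (meval (m + n) (fs ! i)) z) (fact n - j)) ^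
        (2 * (fact (fact n) div j))"
    have "?t (i, j) \<le> sum ?t ({..<length fs} \<times> {1..fact n})"
      by (rule member_le_sum) (use that j in auto)
    then have "?c ^ (2 * (L div j)) \<le> G"
      unfolding G_def orbit_gauge_def L_def by simp
    moreover have jq: "j * (2 * (L div j)) = 2 * L"
      using mult_fact_fact_div[OF j] unfolding L_def by (simp add: mult.left_commute[of j 2])
    ultimately have "?c ^ (2 * (L div j)) \<le> (B ^ j) ^ (2 * (L div j))"
      using B(2) by (simp only: power_mult[symmetric])
    moreover have "2 * (L div j) > 0"
      using jq by (cases "L div j") (auto simp: L_def)
    ultimately show "?c \<le> B ^ j"
      using B(1) by simp
  qed
  then have "sqnorm_sum (m + n) fs z \<le> (\<Sum>i<length fs. (2 * B)\<^sup>2)"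
    unfolding sqnorm_sum_conv_nth by (intro sum_mono power_mono) auto
  also have "\<dots> = 4 * real (length fs) * B\<^sup>2" by (simp add: power_mult_distrib)
  finally have "sqnorm_sum (m + n) fs z ^ L \<le> (4 * real (length fs) * B\<^sup>2) ^ L"
    by (intro power_mono sqnorm_sum_nonneg)
  also have "\<dots> = (4 * real (length fs)) ^ L * G"
    using B(2) by (simp add: power_mult_distrib power_mult[symmetric])
  finally show ?thesis unfolding G_def .
qed

lemma ex_mpoly_coeff_orbit_poly_power:
  assumes C: "subring_C C" and f: "is_mpoly (m + n) C f"
  shows "\<exists>g. is_mpoly (m + n) C g \<and>
    (\<forall>z. meval (m + n) g (symvars m n z) = coeff (orbit_poly m n (meval (m + n) f) z) j ^ q)"
proof -
  obtain \<psi> where \<psi>: "polyfun C (m + n) \<psi>"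
    "\<forall>z. coeff (orbit_poly m n (meval (m + n) f) z) j = \<psi> (symvars m n z)"
    using polyfun_coeff_orbit_poly_symvars[OF C is_mpoly_imp_polyfun[OF C f]] by blast
  obtain g where "is_mpoly (m + n) C g" "meval (m + n) g = (\<lambda>w. \<psi> w ^ q)"
    using polyfun_imp_mpoly[OF C polyfun_power[OF C \<psi>(1)]] by blast
  then show ?thesis using \<psi>(2) by auto
qed

lemma orbit_gauge_eq_sqnorm_sum_symvars:
  assumes C: "subring_C C" and fs: "\<forall>f\<in>set fs. is_mpoly (m + n) C f"
  shows "\<exists>gs. (\<forall>g\<in>set gs. is_mpoly (m + n) C g) \<and>
    (\<forall>z. sqnorm_sum (m + n) gs (symvars m n z) = orbit_gauge m n fs z)"
proof -
  define I :: "(nat \<times> nat) set" where "I = {..<length fs} \<times> {1..fact n}"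
  have "\<exists>g. is_mpoly (m + n) C g \<and> (\<forall>z. meval (m + n) g (symvars m n z) =
      coeff (orbit_poly m n (meval (m + n) (fs ! fst ij)) z) (fact n - snd ij) ^ (fact (fact n) div snd ij))"
    if "ij \<in> I" for ij
    using that fs unfolding I_def by (intro ex_mpoly_coeff_orbit_poly_power C) auto
  then obtain g where g: "\<And>ij. ij \<in> I \<Longrightarrow> is_mpoly (m + n) C (g ij)"
    "\<And>ij z. ij \<in> I \<Longrightarrow> meval (m + n) (g ij) (symvars m n z) =
      coeff (orbit_poly m n (meval (m + n) (fs ! fst ij)) z) (fact n - snd ij) ^ (fact (fact n) div snd ij)"
    by metis
  define ijs where "ijs = List.product [0..<length fs] [1..<Suc (fact n)]"
  have ijs: "distinct ijs" "set ijs = I"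
    unfolding ijs_def I_def by (auto intro: distinct_product)
  have "sqnorm_sum (m + n) (map g ijs) (symvars m n z) = orbit_gauge m n fs z" for z
  proof -
    have "sqnorm_sum (m + n) (map g ijs) (symvars m n z) =
        (\<Sum>ij\<in>I. (cmod (meval (m + n) (g ij) (symvars m n z)))\<^sup>2)"
      unfolding sqnorm_sum_def map_map comp_def ijs(2)[symmetric]
      by (rule sum_list_distinct_conv_sum_set[OF ijs(1)])
    also have "\<dots> = orbit_gauge m n fs z"
      unfolding orbit_gauge_def I_def[symmetric]
      by (intro sum.cong refl) (auto simp: g(2) norm_power power_mult[symmetric] mult.commute)
    finally show ?thesis .
  qed
  then show ?thesis using g(1) ijs(2) by (intro exI[of _ "map g ijs"]) auto
qed

lemma powr_bounds_of_power_bounds: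
  fixes G S K1 K2 \<epsilon> :: real and L :: nat
  assumes "0 \<le> G" "0 \<le> S" "0 < K1" "0 < K2" "0 < L" "0 \<le> \<epsilon>"
    and "G \<le> K1 * S ^ L" "S ^ L \<le> K2 * G"
  defines "b \<equiv> \<epsilon> / (2 * L)"
  shows "(1 / K1) powr b * G powr b \<le> S powr (\<epsilon> / 2)"
    and "S powr (\<epsilon> / 2) \<le> K2 powr b * G powr b"
proof -
  have S_power: "S powr (\<epsilon> / 2) = (S ^ L) powr b"
    using assms(2,5) by (simp add: b_def powr_realpow'[symmetric] powr_powr)
  have "(1 / K1) powr b * G powr b = (G / K1) powr b"
    using assms(1,3) by (simp add: powr_mult[symmetric])
  also have "\<dots> \<le> (S ^ L) powr b"
    using assms by (intro powr_mono2) (auto simp: b_def field_simps)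
  finally show "(1 / K1) powr b * G powr b \<le> S powr (\<epsilon> / 2)" unfolding S_power .
  have "(S ^ L) powr b \<le> (K2 * G) powr b"
    using assms by (intro powr_mono2) (auto simp: b_def)
  then show "S powr (\<epsilon> / 2) \<le> K2 powr b * G powr b"
    using assms(1,4) unfolding S_power by (simp add: powr_mult)
qed

lemma sqnorm_sum_eq_of_apow_eq:
  assumes "\<epsilon> \<noteq> 0" "apow N ps \<epsilon> w = apow N ps \<epsilon> z"
  shows "sqnorm_sum N ps w = sqnorm_sum N ps z"
proof -
  have "sqnorm_sum N ps x = (apow N ps \<epsilon> x) powr (2 / \<epsilon>)" for x
    using assms(1) sqnorm_sum_nonneg[of N ps x] by (simp add: apow_eq_sqnorm_sum powr_powr)
  then show ?thesis using assms(2) by simp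
qed

lemma apow_comparable_orbit_gauge:
  assumes \<epsilon>: "\<epsilon> > 0" and len: "length fs = k"
    and sym: "\<forall>\<pi> z. \<pi> permutes {..<n} \<longrightarrow> apow (m + n) fs \<epsilon> (permvars m n \<pi> z) = apow (m + n) fs \<epsilon> z"
  defines "L \<equiv> fact (fact n) :: nat"
  defines "b \<equiv> \<epsilon> / (2 * L)"
    and "K1 \<equiv> real k * fact n * 4 ^ (fact n * L) + 1" and "K2 \<equiv> (4 * real k) ^ L + 1"
  shows "(1 / K1) powr b * orbit_gauge m n fs z powr b \<le> apow (m + n) fs \<epsilon> z"
    and "apow (m + n) fs \<epsilon> z \<le> K2 powr b * orbit_gauge m n fs z powr b"
proof -
  let ?S = "sqnorm_sum (m + n) fs z" and ?G = "orbit_gauge m n fs z"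
  have sqnorm_sym: "sqnorm_sum (m + n) fs (permvars m n \<pi> z) = ?S" if "\<pi> permutes {..<n}" for \<pi>
    using \<epsilon> sym that by (intro sqnorm_sum_eq_of_apow_eq) auto
  have S: "0 \<le> ?S" and G: "0 \<le> ?G" and L: "0 < L"
    unfolding orbit_gauge_def L_def by (auto intro: sqnorm_sum_nonneg sum_nonneg)
  have K: "0 < K1" "0 < K2"
    unfolding K1_def K2_def by (intro add_nonneg_pos; simp)+
  have "?G \<le> K1 * ?S ^ L"
    using orbit_gauge_le[OF sqnorm_sym] S unfolding K1_def L_def len
    by (simp add: distrib_right add_increasing2)
  moreover have "?S ^ L \<le> K2 * ?G"
    using sqnorm_sum_power_le_orbit_gauge[of m n fs z] G unfolding K2_def L_def len
    by (simp add: distrib_right add_increasing2)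
  ultimately show "(1 / K1) powr b * ?G powr b \<le> apow (m + n) fs \<epsilon> z"
    and "apow (m + n) fs \<epsilon> z \<le> K2 powr b * ?G powr b"
    using powr_bounds_of_power_bounds[OF G S K L] \<epsilon> unfolding b_def by (simp_all add: apow_eq_sqnorm_sum)
qed

lemma symmetric_apow_comparable:
  assumes \<epsilon>: "\<epsilon> \<in> \<rat>" "\<epsilon> \<ge> 0" and C: "subring_C C" and len: "length fs = k"
    and fs: "\<forall>f\<in>set fs. is_mpoly (m + n) C f"
    and sym: "\<forall>\<pi> z. \<pi> permutes {..<n} \<longrightarrow> apow (m + n) fs \<epsilon> (permvars m n \<pi> z) = apow (m + n) fs \<epsilon> z"
  defines "L \<equiv> fact (fact n) :: nat"
  defines "K1 \<equiv> real k * fact n * 4 ^ (fact n * L) + 1" and "K2 \<equiv> (4 * real k) ^ L + 1"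
  shows "\<exists>gs \<epsilon>'. \<epsilon>' \<in> \<rat> \<and> \<epsilon>' \<ge> 0 \<and> (\<forall>g\<in>set gs. is_mpoly (m + n) C g) \<and>
    (\<forall>z. (1 / K1) powr (\<epsilon> / (2 * L)) * apow (m + n) gs \<epsilon>' (symvars m n z) \<le> apow (m + n) fs \<epsilon> z \<and>
         apow (m + n) fs \<epsilon> z \<le> K2 powr (\<epsilon> / (2 * L)) * apow (m + n) gs \<epsilon>' (symvars m n z))"
proof -
  obtain gs where gs: "\<forall>g\<in>set gs. is_mpoly (m + n) C g"
    "\<And>z. sqnorm_sum (m + n) gs (symvars m n z) = orbit_gauge m n fs z"
    using orbit_gauge_eq_sqnorm_sum_symvars[OF C fs] by blast
  have K: "0 < K1" "0 < K2"
    unfolding K1_def K2_def by (intro add_nonneg_pos; simp)+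
  have "(1 / K1) powr (\<epsilon> / (2 * L)) * apow (m + n) gs (\<epsilon> / L) (symvars m n z) \<le> apow (m + n) fs \<epsilon> z \<and>
      apow (m + n) fs \<epsilon> z \<le> K2 powr (\<epsilon> / (2 * L)) * apow (m + n) gs (\<epsilon> / L) (symvars m n z)" for z
  proof (cases "\<epsilon> = 0")
    case True
    then show ?thesis using K by (simp add: apow_def)
  next
    case False
    then have "apow (m + n) gs (\<epsilon> / L) (symvars m n z) = orbit_gauge m n fs z powr (\<epsilon> / (2 * L))"
      by (simp add: apow_eq_sqnorm_sum gs(2) L_def mult.commute)
    then show ?thesis
      using apow_comparable_orbit_gauge[OF _ len sym, of z] \<epsilon>(2) False
      unfolding K1_def K2_def L_def by simp
  qed
  then show ?thesis
    using gs(1) \<epsilon> by (intro exI[of _ gs] exI[of _ "\<epsilon> / L"]) (simp add: Rats_divide)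
qed

theorem lemma4p3:
  fixes \<epsilon> :: real and D n k :: nat
  assumes "\<epsilon> \<in> \<rat>" "\<epsilon> \<ge> 0" "D > 0"
  shows "\<exists>c1 c2. c1 > 0 \<and> c2 > 0 \<and>
    (\<forall>(C :: complex set) m (fs :: mpoly list).
       subring_C C \<and> length fs = k \<and>
       (\<forall>f\<in>set fs. is_mpoly (m + n) C f \<and> mdeg_le (m + n) f D) \<and>
       (\<forall>\<pi> z. \<pi> permutes {..<n} \<longrightarrow>
            apow (m + n) fs \<epsilon> (permvars m n \<pi> z) = apow (m + n) fs \<epsilon> z)
     \<longrightarrow> (\<exists>(gs :: mpoly list) \<epsilon>'. \<epsilon>' \<in> \<rat> \<and> \<epsilon>' \<ge> 0 \<and>
            (\<forall>g\<in>set gs. is_mpoly (m + n) C g) \<and>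
            (\<forall>z. c1 * apow (m + n) gs \<epsilon>' (symvars m n z) \<le> apow (m + n) fs \<epsilon> z \<and>
                 apow (m + n) fs \<epsilon> z \<le> c2 * apow (m + n) gs \<epsilon>' (symvars m n z))))"
proof -
  define L :: nat where "L = fact (fact n)"
  define K1 :: real where "K1 = real k * fact n * 4 ^ (fact n * L) + 1"
  define K2 :: real where "K2 = (4 * real k) ^ L + 1"
  have "0 < K1" "0 < K2"
    unfolding K1_def K2_def by (intro add_nonneg_pos; simp)+
  show ?thesis
  proof (rule exI[of _ "(1 / K1) powr (\<epsilon> / (2 * L))"], rule exI[of _ "K2 powr (\<epsilon> / (2 * L))"],
      intro conjI allI impI)
    show "0 < (1 / K1) powr (\<epsilon> / (2 * L))" "0 < K2 powr (\<epsilon> / (2 * L))"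
      using \<open>0 < K1\<close> \<open>0 < K2\<close> by simp_all
  qed (unfold K1_def K2_def L_def, elim conjE, rule symmetric_apow_comparable[OF assms(1,2)], auto)
qed

end
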